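(* Let $n$ be a positive integer. A UC-move is realized by a sequence of $V^{n}$-moves and welded Reidemeister moves if and only if $n=1$.
   Context: A virtual link diagram is the image of an immersion of finitely many ordered, oriented circles in the plane with transverse double points, each a classical crossing (with over/under information) or a virtual crossing. Welded Reidemeister moves are R1–R3, the virtual moves VR1–VR3 (Reidemeister moves with only virtual crossings) and VR4 (a strand with only virtual crossings slides past a classical crossing), and the OC move (a strand passing over two other strands at classical crossings, those two strands crossing each other virtually, may be slid across that virtual crossing). The UC move is the same as OC with "over" replaced by "under". The $V^{n}$-move: inside a disk the diagram consists of two arcs $a,b$ oriented in the same direction; on one side they are parallel without crossings; on the other side the tangle is the $2$-braid word $(\sigma\tau)^{n}$, where $\sigma$ is a classical crossing with $b$ over $a$ and $\tau$ a virtual crossing (so $n$ classical crossings, all with $b$ over and of the same sign, alternating with $n$ virtual crossings). The move replaces one side by the other. (The $V^{1}$-move is equivalent to crossing virtualization, which replaces a classical crossing by a virtual one.) *)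

theory Defs
  imports Main "HOL-Library.Multiset"
begin

text \<open>
  A virtual link diagram modulo planar isotopy and the virtual moves VR1--VR4
  is the same thing as its Gauss diagram: ordered oriented circles (components),
  each carrying a cyclic word of arrow endpoints.  Each classical crossing is an
  arrow from its over-crossing point (tail) to its under-crossing point (head),
  carrying the sign of the crossing.  Virtual crossings are not recorded.

  A letter is (arrow label, endpoint type, sign), sign True = positive.
  A diagram is a list of components (ordered); each component is a linear word
  read as a cyclic word (rotation is one of the equivalence steps below).
\<close>

datatype endp = Tl | Hd

type_synonym letter = "nat \<times> endp \<times> bool"
type_synonym gauss = "letter list list"

definition wf_gauss :: "gauss \<Rightarrow> bool" where
  "wf_gauss D \<longleftrightarrow> (\<forall>l. let occ = filter (\<lambda>c. fst c = l) (concat D) in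
      occ = [] \<or> (\<exists>s. mset occ = {#(l, Tl, s), (l, Hd, s)#}))"

text \<open>Templates: the diagram outside finitely many disjoint small disks, where the
  i-th disk-segment is a hole \<open>Inr i\<close> in some component.\<close>
type_synonym template = "(letter + nat) list list"

definition fill :: "template \<Rightarrow> (nat \<Rightarrow> letter list) \<Rightarrow> gauss" where
  "fill T f = map (\<lambda>c. concat (map (\<lambda>a. case a of Inl x \<Rightarrow> [x] | Inr i \<Rightarrow> f i) c)) T"

definition holes :: "template \<Rightarrow> nat list" where
  "holes T = [projr a. a \<leftarrow> concat T, \<not> isl a]"

definition is_template :: "template \<Rightarrow> nat \<Rightarrow> bool" where
  "is_template T k \<longleftrightarrow> mset (holes T) = mset [0..<k]"

definition local_move :: "nat \<Rightarrow> ((nat \<Rightarrow> letter list) \<Rightarrow> (nat \<Rightarrow> letter list) \<Rightarrow> bool)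
    \<Rightarrow> gauss \<Rightarrow> gauss \<Rightarrow> bool" where
  "local_move k M D D' \<longleftrightarrow> wf_gauss D \<and> wf_gauss D' \<and>
     (\<exists>T f g. is_template T k \<and> D = fill T f \<and> D' = fill T g \<and> (M f g \<or> M g f))"

definition R1_pic :: "(nat \<Rightarrow> letter list) \<Rightarrow> (nat \<Rightarrow> letter list) \<Rightarrow> bool" where
  "R1_pic f g \<longleftrightarrow> f 0 = [] \<and>
     (\<exists>x s. g 0 = [(x, Tl, s), (x, Hd, s)] \<or> g 0 = [(x, Hd, s), (x, Tl, s)])"

definition R2_pic :: "(nat \<Rightarrow> letter list) \<Rightarrow> (nat \<Rightarrow> letter list) \<Rightarrow> bool" where
  "R2_pic f g \<longleftrightarrow> f 0 = [] \<and> f 1 = [] \<and>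
     (\<exists>x y s. (g 0 = [(x, Tl, s), (y, Tl, \<not> s)] \<or> g 0 = [(y, Tl, \<not> s), (x, Tl, s)]) \<and>
              (g 1 = [(x, Hd, s), (y, Hd, \<not> s)] \<or> g 1 = [(y, Hd, \<not> s), (x, Hd, s)]))"

text \<open>R3: strands top (segment 0), middle (segment 1), bottom (segment 2); arrows
  x: top to middle (sign a), y: top to bottom (sign b), z: middle to bottom
  (sign c).  With lam = side of the move (True = +1), the endpoint orders are
  determined by: on each segment the first-listed arrow comes first iff
  lam * (product of the two signs) = -1.  The move flips lam (all orders
  reversed).  These are exactly the 8 oriented Reidemeister III moves.\<close>
definition r3_side :: "bool \<Rightarrow> nat \<Rightarrow> nat \<Rightarrow> nat \<Rightarrow> bool \<Rightarrow> bool \<Rightarrow> bool \<Rightarrow> nat \<Rightarrow> letter list" where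
  "r3_side lam x y z a b c i =
     (if i = 0 then (let w = [(x, Tl, a), (y, Tl, b)] in if \<not> (lam \<longleftrightarrow> (a \<longleftrightarrow> b)) then w else rev w)
      else if i = 1 then (let w = [(x, Hd, a), (z, Tl, c)] in if \<not> (lam \<longleftrightarrow> (a \<longleftrightarrow> c)) then w else rev w)
      else if i = 2 then (let w = [(y, Hd, b), (z, Hd, c)] in if \<not> (lam \<longleftrightarrow> (b \<longleftrightarrow> c)) then w else rev w)
      else [])"

definition R3_pic :: "(nat \<Rightarrow> letter list) \<Rightarrow> (nat \<Rightarrow> letter list) \<Rightarrow> bool" where
  "R3_pic f g \<longleftrightarrow> (\<exists>lam x y z a b c. (\<forall>i<3. f i = r3_side lam x y z a b c i \<and>
                                               g i = r3_side (\<not> lam) x y z a b c i))"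

definition OC_pic :: "(nat \<Rightarrow> letter list) \<Rightarrow> (nat \<Rightarrow> letter list) \<Rightarrow> bool" where
  "OC_pic f g \<longleftrightarrow> (\<exists>x y s t. f 0 = [(x, Tl, s), (y, Tl, t)] \<and> g 0 = [(y, Tl, t), (x, Tl, s)])"

definition UC_pic :: "(nat \<Rightarrow> letter list) \<Rightarrow> (nat \<Rightarrow> letter list) \<Rightarrow> bool" where
  "UC_pic f g \<longleftrightarrow> (\<exists>x y s t. f 0 = [(x, Hd, s), (y, Hd, t)] \<and> g 0 = [(y, Hd, t), (x, Hd, s)])"

definition Vn_pic :: "nat \<Rightarrow> (nat \<Rightarrow> letter list) \<Rightarrow> (nat \<Rightarrow> letter list) \<Rightarrow> bool" where
  "Vn_pic n f g \<longleftrightarrow> f 0 = [] \<and> f 1 = [] \<and>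
     (\<exists>xs s. length xs = n \<and> distinct xs \<and>
        g 0 = map (\<lambda>x. (x, Tl, s)) xs \<and> g 1 = map (\<lambda>x. (x, Hd, s)) xs)"

definition iso_step :: "gauss \<Rightarrow> gauss \<Rightarrow> bool" where
  "iso_step D D' \<longleftrightarrow> wf_gauss D \<and>
     ((\<exists>i < length D. D' = D[i := rotate1 (D ! i)]) \<or>
      (\<exists>\<pi>. inj \<pi> \<and> D' = map (map (\<lambda>(l, e, s). (\<pi> l, e, s))) D))"

definition welded_step :: "gauss \<Rightarrow> gauss \<Rightarrow> bool" where
  "welded_step D D' \<longleftrightarrow> iso_step D D' \<or> iso_step D' D \<or>
     local_move 1 R1_pic D D' \<or> local_move 2 R2_pic D D' \<or>
     local_move 3 R3_pic D D' \<or> local_move 1 OC_pic D D'"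

definition Vn_step :: "nat \<Rightarrow> gauss \<Rightarrow> gauss \<Rightarrow> bool" where
  "Vn_step n = local_move 2 (Vn_pic n)"

definition UC_step :: "gauss \<Rightarrow> gauss \<Rightarrow> bool" where
  "UC_step = local_move 1 UC_pic"

end

theory Submission
  imports Defs "HOL-Number_Theory.Cong"
begin

text \<open>
  For n = 1 a V^1-move inserts or deletes a single arrow, so every Gauss diagram is connected by
  V^1-moves to the arrowless diagram with the same number of components, and so are the two sides
  of any UC-move.

  For n \<noteq> 1 we use an invariant of two-component diagrams. Every arrow endpoint carries two integer
  weights, determined by the sign of its arrow and by the components of its tail and head, and the
  pair invariant sums, along each component, the first weight times the second weight over all
  ordered pairs of endpoints. Under a welded move or a V^n-move the change of the weight totals of a
  component and of the pair invariant splits into contributions of the disks of the move, because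
  the cross terms between a disk and the rest of the diagram are products with changes of totals;
  all contributions vanish mod n (for a V^n-move since its n arrows carry equal weights). Moving the
  base point of a component changes the pair invariant by multiples of the totals, so the invariant
  is the statement that the totals and the pair invariant vanish mod n. It holds for the diagram
  \<open>uc_source\<close>, which a single UC-move turns into a diagram with pair invariant -1.
\<close>

definition expand :: "(nat \<Rightarrow> letter list) \<Rightarrow> letter + nat \<Rightarrow> letter list" where
  "expand f a = (case a of Inl c \<Rightarrow> [c] | Inr i \<Rightarrow> f i)"

lemma expand_simps [simp]: "expand f (Inl c) = [c]" "expand f (Inr i) = f i"
  by (simp_all add: expand_def)

lemma fill_eq_expand: "fill T f = map (\<lambda>w. concat (map (expand f) w)) T"
  by (simp add: fill_def expand_def[abs_def])

lemma length_fill [simp]: "length (fill T f) = length T"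
  by (simp add: fill_def)

lemma nth_fill: "j < length T \<Longrightarrow> fill T f ! j = concat (map (expand f) (T ! j))"
  by (simp add: fill_eq_expand)

lemma concat_fill: "concat (fill T f) = concat (map (expand f) (concat T))"
  by (induction T) (simp_all add: fill_eq_expand)

definition fixed_letters :: "(letter + nat) list \<Rightarrow> letter list" where
  "fixed_letters w = [c. Inl c \<leftarrow> w]"

definition hole_indices :: "(letter + nat) list \<Rightarrow> nat list" where
  "hole_indices w = [i. Inr i \<leftarrow> w]"

lemma fixed_letters_simps [simp]:
  "fixed_letters [] = []" "fixed_letters (Inl c # w) = c # fixed_letters w"
  "fixed_letters (Inr i # w) = fixed_letters w"
  by (simp_all add: fixed_letters_def)

lemma hole_indices_simps [simp]:
  "hole_indices [] = []" "hole_indices (Inl c # w) = hole_indices w"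
  "hole_indices (Inr i # w) = i # hole_indices w"
  "hole_indices (v @ w) = hole_indices v @ hole_indices w"
  by (simp_all add: hole_indices_def)

lemma holes_eq_hole_indices: "holes T = hole_indices (concat T)"
proof -
  have "[projr a. a \<leftarrow> w, \<not> isl a] = hole_indices w" for w
  proof (induction w)
    case (Cons a w) then show ?case by (cases a) auto
  qed simp
  then show ?thesis by (simp add: holes_def)
qed

lemma set_hole_indices: "i \<in> set (hole_indices w) \<longleftrightarrow> Inr i \<in> set w"
proof (induction w)
  case (Cons a w) then show ?case by (cases a) auto
qed simp

lemma mset_concat_fill:
  "mset (concat (fill T f)) = mset (fixed_letters (concat T)) + (\<Sum>i\<leftarrow>holes T. mset (f i))"
proof -
  have "mset (concat (map (expand f) w)) = mset (fixed_letters w) + (\<Sum>i\<leftarrow>hole_indices w. mset (f i))"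
    for w
  proof (induction w)
    case (Cons a w) then show ?case by (cases a) auto
  qed simp
  then show ?thesis by (simp add: concat_fill holes_eq_hole_indices)
qed

lemma set_holes: "is_template T k \<Longrightarrow> set (holes T) = {..<k}"
  unfolding is_template_def by (metis atLeast_upt set_mset_mset)

lemma sum_list_holes:
  assumes "is_template T k"
  shows "(\<Sum>i\<leftarrow>holes T. F i) = (\<Sum>i<k. F i)"
proof -
  have "(\<Sum>i\<leftarrow>holes T. F i) = sum_mset (image_mset F (mset (holes T)))"
    by (simp only: mset_map[symmetric] sum_mset_sum_list)
  also have "\<dots> = (\<Sum>i\<leftarrow>[0..<k]. F i)"
    using assms unfolding is_template_def by (simp only: mset_map[symmetric] sum_mset_sum_list)
  finally show ?thesis by (simp add: interv_sum_list_conv_sum_set_nat atLeast0LessThan)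
qed

lemma hole_in_template:
  assumes "is_template T k"
  shows "i < k \<longleftrightarrow> (\<exists>w\<in>set T. Inr i \<in> set w)"
proof -
  have "i < k \<longleftrightarrow> i \<in> set (holes T)" using set_holes[OF assms] by auto
  then show ?thesis by (simp add: holes_eq_hole_indices set_hole_indices)
qed

lemma local_move_sym: "local_move k M D D' \<Longrightarrow> local_move k M D' D"
  unfolding local_move_def by blast

lemma wf_gauss_occurrences:
  assumes "wf_gauss D" "(l, e, s) \<in> set (concat D)"
  shows "mset (filter (\<lambda>c. fst c = l) (concat D)) = {#(l, Tl, s), (l, Hd, s)#}"
proof -
  let ?occ = "filter (\<lambda>c. fst c = l) (concat D)"
  have mem: "(l, e, s) \<in># mset ?occ" using assms(2) by simp
  then have "?occ \<noteq> []" by (metis mset_zero_iff_right empty_iff set_mset_empty)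
  then obtain s' where occ_eq: "mset ?occ = {#(l, Tl, s'), (l, Hd, s')#}"
    using assms(1) unfolding wf_gauss_def Let_def by blast
  have "(l, e, s) \<in># {#(l, Tl, s'), (l, Hd, s')#}" using mem unfolding occ_eq .
  then have "s' = s" by (cases e) auto
  with occ_eq show ?thesis by (simp only:)
qed

lemma wf_gauss_endpoint_unique:
  assumes "wf_gauss D" "mset (concat D) = A + B" "(l, e, s) \<in># A" "(l, e, s') \<in># B"
  shows False
proof -
  let ?P = "\<lambda>c. fst c = l \<and> fst (snd c) = e"
  have "(l, e, s) \<in> set (concat D)"
    using assms(2,3) by (metis set_mset_mset union_iff)
  then have occ: "mset (filter (\<lambda>c. fst c = l) (concat D)) = {#(l, Tl, s), (l, Hd, s)#}"
    by (rule wf_gauss_occurrences[OF assms(1)])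
  have "filter_mset ?P (mset (concat D)) =
      filter_mset (\<lambda>c. fst (snd c) = e) (mset (filter (\<lambda>c. fst c = l) (concat D)))"
    by (simp add: filter_filter_mset conj_commute)
  then have "size (filter_mset ?P (mset (concat D))) = 1"
    unfolding occ by (cases e) auto
  moreover have "filter_mset ?P A \<noteq> {#}" "filter_mset ?P B \<noteq> {#}"
    using assms(3,4) by (metis (mono_tags, lifting) empty_iff fst_conv set_mset_empty
        set_mset_filter mem_Collect_eq snd_conv)+
  ultimately show False
    unfolding assms(2) filter_union_mset size_union nonempty_has_size by linarith
qed

definition delete_arrow :: "nat \<Rightarrow> gauss \<Rightarrow> gauss" where
  "delete_arrow l = map (filter (\<lambda>c. fst c \<noteq> l))"

lemma concat_delete_arrow: "concat (delete_arrow l D) = filter (\<lambda>c. fst c \<noteq> l) (concat D)"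
  by (induction D) (simp_all add: delete_arrow_def)

lemma wf_gauss_delete_arrow:
  assumes "wf_gauss D"
  shows "wf_gauss (delete_arrow l D)"
  unfolding wf_gauss_def Let_def concat_delete_arrow filter_filter
proof
  fix l'
  show "filter (\<lambda>c. fst c \<noteq> l \<and> fst c = l') (concat D) = [] \<or>
      (\<exists>s. mset (filter (\<lambda>c. fst c \<noteq> l \<and> fst c = l') (concat D)) = {#(l', Tl, s), (l', Hd, s)#})"
  proof (cases "l' = l")
    case False
    then have "filter (\<lambda>c. fst c \<noteq> l \<and> fst c = l') (concat D) = filter (\<lambda>c. fst c = l') (concat D)"
      by (intro filter_cong) auto
    with assms show ?thesis unfolding wf_gauss_def Let_def by (simp only:)
  qed simp
qed

lemma Vn_step_1_delete_arrow:
  assumes wf: "wf_gauss D" and mem: "(l, e, s) \<in> set (concat D)"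
  shows "Vn_step 1 D (delete_arrow l D)"
proof -
  have occ: "mset (filter (\<lambda>c. fst c = l) (concat D)) = {#(l, Tl, s), (l, Hd, s)#}"
    using wf_gauss_occurrences[OF wf mem] .
  define hole :: "letter \<Rightarrow> letter + nat" where
    "hole c = (if fst c = l then Inr (if fst (snd c) = Tl then 0 else 1) else Inl c)" for c
  define T where "T = map (map hole) D"
  define g :: "nat \<Rightarrow> letter list" where "g i = [(l, if i = 0 then Tl else Hd, s)]" for i
  have "hole_indices (map hole w) =
      map (\<lambda>c. if fst (snd c) = Tl then 0 else 1) (filter (\<lambda>c. fst c = l) w)" for w
    by (induction w) (simp_all add: hole_def)
  then have "mset (holes T) = image_mset (\<lambda>c. if fst (snd c) = Tl then 0 else 1) (mset (filter (\<lambda>c. fst c = l) (concat D)))"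
    by (simp add: T_def holes_eq_hole_indices flip: map_concat)
  then have "is_template T 2"
    unfolding is_template_def occ by (simp add: numeral_2_eq_2)
  moreover have "fill T g = D"
  proof -
    have expand_hole: "expand g (hole c) = [c]" if "c \<in> set (concat D)" for c
    proof (cases "fst c = l")
      case True
      then have "c \<in># mset (filter (\<lambda>c. fst c = l) (concat D))" using that by simp
      then show ?thesis unfolding occ by (auto simp: hole_def g_def)
    qed (simp add: hole_def)
    have "set w \<subseteq> set (concat D) \<Longrightarrow> concat (map (expand g \<circ> hole) w) = w" for w
      by (induction w) (simp_all add: expand_hole)
    then show ?thesis unfolding fill_eq_expand T_def by (auto simp: comp_def intro!: map_idI)
  qed
  moreover have "fill T (\<lambda>_. []) = delete_arrow l D"
  proof -
    have "concat (map (expand (\<lambda>_. []) \<circ> hole) w) = filter (\<lambda>c. fst c \<noteq> l) w" for w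
      by (induction w) (simp_all add: hole_def)
    then show ?thesis unfolding fill_eq_expand T_def delete_arrow_def by simp
  qed
  moreover have "Vn_pic 1 (\<lambda>_. []) g"
    unfolding Vn_pic_def g_def by (auto intro!: exI[of _ "[l]"])
  ultimately show ?thesis
    unfolding Vn_step_def local_move_def using wf wf_gauss_delete_arrow[OF wf]
    by (intro conjI exI[of _ T] exI[of _ g] exI[of _ "\<lambda>_. []"]) simp_all
qed

lemma Vn_step_1_reaches_arrowless:
  "wf_gauss D \<Longrightarrow> (Vn_step 1)\<^sup>*\<^sup>* D (replicate (length D) [])"
proof (induction "length (concat D)" arbitrary: D rule: less_induct)
  case less
  show ?case
  proof (cases "concat D")
    case Nil
    then show ?thesis by (simp add: replicate_length_same)
  next
    case (Cons c _)
    obtain l e s where "c = (l, e, s)" by (cases c)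
    with Cons have mem: "(l, e, s) \<in> set (concat D)" by simp
    have "length (concat (delete_arrow l D)) < length (concat D)"
      unfolding concat_delete_arrow using mem by (intro length_filter_less) auto
    then have "(Vn_step 1)\<^sup>*\<^sup>* (delete_arrow l D) (replicate (length (delete_arrow l D)) [])"
      using less.hyps wf_gauss_delete_arrow[OF less.prems] by blast
    then have "(Vn_step 1)\<^sup>*\<^sup>* (delete_arrow l D) (replicate (length D) [])"
      by (simp add: delete_arrow_def)
    with Vn_step_1_delete_arrow[OF less.prems mem] show ?thesis
      by (rule converse_rtranclp_into_rtranclp)
  qed
qed

lemma UC_step_by_Vn_step_1:
  assumes "UC_step D D'"
  shows "(Vn_step 1)\<^sup>*\<^sup>* D D'"
proof -
  obtain T f g where wf: "wf_gauss D" "wf_gauss D'" and "D = fill T f" "D' = fill T g"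
    using assms unfolding UC_step_def local_move_def by blast
  then have len: "length D' = length D" by simp
  have "symp (Vn_step 1)"
    by (auto simp: symp_def Vn_step_def intro: local_move_sym)
  then have "symp (Vn_step 1)\<^sup>*\<^sup>*" by (rule symp_rtranclp)
  then have "(Vn_step 1)\<^sup>*\<^sup>* (replicate (length D) []) D'"
    using Vn_step_1_reaches_arrowless[OF wf(2)] len by (metis sympD)
  with Vn_step_1_reaches_arrowless[OF wf(1)] show ?thesis by (rule rtranclp_trans)
qed

section \<open>Pair sums of weighted words\<close>

fun pair_sum :: "('a \<Rightarrow> int) \<Rightarrow> ('a \<Rightarrow> int) \<Rightarrow> 'a list \<Rightarrow> int" where
  "pair_sum h g [] = 0"
| "pair_sum h g (x # xs) = h x * (\<Sum>y\<leftarrow>xs. g y) + pair_sum h g xs"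

lemma pair_sum_append:
  "pair_sum h g (xs @ ys) = pair_sum h g xs + pair_sum h g ys + (\<Sum>x\<leftarrow>xs. h x) * (\<Sum>y\<leftarrow>ys. g y)"
  by (induction xs) (auto simp: algebra_simps)

lemma pair_sum_map: "pair_sum h g (map r xs) = pair_sum (h \<circ> r) (g \<circ> r) xs"
  by (induction xs) (auto simp: comp_def)

lemma pair_sum_rotate1:
  "pair_sum h g (rotate1 (x # xs)) =
     pair_sum h g (x # xs) + (\<Sum>y\<leftarrow>x # xs. h y) * g x - h x * (\<Sum>y\<leftarrow>x # xs. g y)"
  by (simp add: pair_sum_append algebra_simps)

lemma pair_sum_cong:
  "(\<And>x. x \<in> set xs \<Longrightarrow> h' x = h x) \<Longrightarrow> (\<And>x. x \<in> set xs \<Longrightarrow> g' x = g x) \<Longrightarrow>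
    pair_sum h' g' xs = pair_sum h g xs"
  by (induction xs) (auto cong: map_cong)

lemma sum_list_const: "(\<And>x. x \<in> set xs \<Longrightarrow> F x = c) \<Longrightarrow> (\<Sum>x\<leftarrow>xs. F x) = int (length xs) * c"
  by (induction xs) (auto simp: algebra_simps)

lemma pair_sum_eq_0:
  "(\<forall>x\<in>set xs. h x = 0) \<or> (\<forall>x\<in>set xs. g x = 0) \<Longrightarrow> pair_sum h g xs = 0"
  by (induction xs) (auto simp: sum_list_const[where c = 0])

lemma dvd_sum_list_uniform:
  "(\<And>x. x \<in> set xs \<Longrightarrow> F x = F (hd xs)) \<Longrightarrow> int (length xs) dvd (\<Sum>x\<leftarrow>xs. F x)"
  using sum_list_const[of xs F "F (hd xs)"] by simp

lemma sum_list_rotate1: "(\<Sum>x\<leftarrow>rotate1 xs. h x) = (\<Sum>x\<leftarrow>xs. h x :: 'a :: comm_monoid_add)"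
  by (cases xs) (simp_all add: add.commute)

lemma sum_lessThan_3: "(\<Sum>i<3. F i) = F 0 + F 1 + F 2" for F :: "nat \<Rightarrow> 'a :: comm_monoid_add"
  by (simp add: numeral_3_eq_3 numeral_2_eq_2 lessThan_Suc add.commute add.left_commute)

lemma sum_list_concat_cong:
  fixes h h' :: "'a \<Rightarrow> int"
  assumes "\<And>a. a \<in> set t \<Longrightarrow> [(\<Sum>x\<leftarrow>q a. h' x) = (\<Sum>x\<leftarrow>p a. h x)] (mod m)"
  shows "[(\<Sum>x\<leftarrow>concat (map q t). h' x) = (\<Sum>x\<leftarrow>concat (map p t). h x)] (mod m)"
  using assms by (induction t) (auto intro: cong_add)

lemma pair_sum_concat_cong:
  fixes h h' g g' :: "'a \<Rightarrow> int"
  assumes "\<And>a. a \<in> set t \<Longrightarrow> [(\<Sum>x\<leftarrow>q a. h' x) = (\<Sum>x\<leftarrow>p a. h x)] (mod m)"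
    and "\<And>a. a \<in> set t \<Longrightarrow> [(\<Sum>x\<leftarrow>q a. g' x) = (\<Sum>x\<leftarrow>p a. g x)] (mod m)"
  shows "[pair_sum h' g' (concat (map q t)) - pair_sum h g (concat (map p t)) =
          (\<Sum>a\<leftarrow>t. pair_sum h' g' (q a) - pair_sum h g (p a))] (mod m)"
  using assms
proof (induction t)
  case (Cons a t)
  let ?H' = "\<Sum>x\<leftarrow>q a. h' x" and ?H = "\<Sum>x\<leftarrow>p a. h x"
  let ?G' = "\<Sum>x\<leftarrow>concat (map q t). g' x" and ?G = "\<Sum>x\<leftarrow>concat (map p t). g x"
  have "[?H' * ?G' = ?H * ?G] (mod m)"
    using Cons.prems by (intro cong_mult sum_list_concat_cong) auto
  then have "[?H' * ?G' - ?H * ?G = 0] (mod m)"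
    by (simp add: cong_iff_dvd_diff)
  moreover have "[pair_sum h' g' (concat (map q t)) - pair_sum h g (concat (map p t)) =
          (\<Sum>a\<leftarrow>t. pair_sum h' g' (q a) - pair_sum h g (p a))] (mod m)"
    using Cons by simp
  ultimately have "[(pair_sum h' g' (q a) - pair_sum h g (p a)) +
      (pair_sum h' g' (concat (map q t)) - pair_sum h g (concat (map p t))) + (?H' * ?G' - ?H * ?G) =
      (pair_sum h' g' (q a) - pair_sum h g (p a)) + (\<Sum>a\<leftarrow>t. pair_sum h' g' (q a) - pair_sum h g (p a)) + 0] (mod m)"
    by (intro cong_add cong_refl)
  then show ?case by (simp add: pair_sum_append algebra_simps)
qed simp

lemma expand_word_cong:
  fixes h h' g g' :: "letter \<Rightarrow> int"
  assumes fixed: "\<And>c. Inl c \<in> set w \<Longrightarrow> h' c = h c \<and> g' c = g c"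
    and holes: "\<And>i. Inr i \<in> set w \<Longrightarrow>
      [(\<Sum>c\<leftarrow>q i. h' c) = (\<Sum>c\<leftarrow>p i. h c)] (mod m) \<and> [(\<Sum>c\<leftarrow>q i. g' c) = (\<Sum>c\<leftarrow>p i. g c)] (mod m)"
  shows "[(\<Sum>c\<leftarrow>concat (map (expand q) w). h' c) = (\<Sum>c\<leftarrow>concat (map (expand p) w). h c)] (mod m)"
    and "[(\<Sum>c\<leftarrow>concat (map (expand q) w). g' c) = (\<Sum>c\<leftarrow>concat (map (expand p) w). g c)] (mod m)"
    and "[pair_sum h' g' (concat (map (expand q) w)) - pair_sum h g (concat (map (expand p) w)) =
          (\<Sum>i\<leftarrow>hole_indices w. pair_sum h' g' (q i) - pair_sum h g (p i))] (mod m)"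
proof -
  have pieces: "[(\<Sum>c\<leftarrow>expand q a. h' c) = (\<Sum>c\<leftarrow>expand p a. h c)] (mod m) \<and>
      [(\<Sum>c\<leftarrow>expand q a. g' c) = (\<Sum>c\<leftarrow>expand p a. g c)] (mod m)" if "a \<in> set w" for a
  proof (cases a)
    case (Inl c)
    with that fixed[of c] show ?thesis by simp
  next
    case (Inr i)
    with that holes[of i] show ?thesis by simp
  qed
  then show "[(\<Sum>c\<leftarrow>concat (map (expand q) w). h' c) = (\<Sum>c\<leftarrow>concat (map (expand p) w). h c)] (mod m)"
    and "[(\<Sum>c\<leftarrow>concat (map (expand q) w). g' c) = (\<Sum>c\<leftarrow>concat (map (expand p) w). g c)] (mod m)"
    by (auto intro: sum_list_concat_cong)
  have "[pair_sum h' g' (concat (map (expand q) w)) - pair_sum h g (concat (map (expand p) w)) =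
      (\<Sum>a\<leftarrow>w. pair_sum h' g' (expand q a) - pair_sum h g (expand p a))] (mod m)"
    by (rule pair_sum_concat_cong) (use pieces in auto)
  moreover have "(\<Sum>a\<leftarrow>v. pair_sum h' g' (expand q a) - pair_sum h g (expand p a)) =
      (\<Sum>i\<leftarrow>hole_indices v. pair_sum h' g' (q i) - pair_sum h g (p i))" for v
  proof (induction v)
    case (Cons a v) then show ?case by (cases a) auto
  qed simp
  ultimately show "[pair_sum h' g' (concat (map (expand q) w)) - pair_sum h g (concat (map (expand p) w)) =
      (\<Sum>i\<leftarrow>hole_indices w. pair_sum h' g' (q i) - pair_sum h g (p i))] (mod m)"
    by simp
qed

section \<open>A mod n invariant of two-component diagrams\<close>

definition endpoint_on :: "gauss \<Rightarrow> nat \<Rightarrow> nat \<Rightarrow> endp \<Rightarrow> bool" where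
  "endpoint_on D j l e \<longleftrightarrow> (\<exists>s. (l, e, s) \<in> set (D ! j))"

definition sign_int :: "bool \<Rightarrow> int" where
  "sign_int s = (if s then 1 else -1)"

text \<open>
  The first weight marks both endpoints of the arrows
  from component 1 to component 0. The second weight marks the endpoints of the self-arrows of
  component 0, tails positively and heads negatively, and the heads of the arrows from component 0
  to component 1. Both are multiplied by the sign of the arrow.
\<close>

fun first_weight :: "gauss \<Rightarrow> nat \<Rightarrow> letter \<Rightarrow> int" where
  "first_weight D j (l, e, s) =
     (if j = 0 then if e = Hd \<and> endpoint_on D 1 l Tl then sign_int s else 0
      else if e = Tl \<and> endpoint_on D 0 l Hd then sign_int s else 0)"

fun second_weight :: "gauss \<Rightarrow> nat \<Rightarrow> letter \<Rightarrow> int" where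
  "second_weight D j (l, e, s) =
     (if j = 0 then if e = Tl \<and> endpoint_on D 0 l Hd then sign_int s
                    else if e = Hd \<and> endpoint_on D 0 l Tl then - sign_int s else 0
      else if e = Hd \<and> endpoint_on D 0 l Tl then sign_int s else 0)"

lemma weights_endpoint_on_cong:
  assumes "\<And>j e. j < 2 \<Longrightarrow> endpoint_on D' j l e \<longleftrightarrow> endpoint_on D j l e"
  shows "first_weight D' j (l, e, s) = first_weight D j (l, e, s) \<and>
    second_weight D' j (l, e, s) = second_weight D j (l, e, s)"
  using assms by simp

definition pair_sum_in :: "gauss \<Rightarrow> nat \<Rightarrow> letter list \<Rightarrow> int" where
  "pair_sum_in D j = pair_sum (first_weight D j) (second_weight D j)"

definition pair_invariant :: "gauss \<Rightarrow> int" where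
  "pair_invariant D = pair_sum_in D 0 (D ! 0) + pair_sum_in D 1 (D ! 1)"

text \<open>
  The pair sum of a cyclic word depends on the base point only modulo the weight totals
  (see \<open>vanishes_mod_rotate\<close>), so these totals are part of the invariant.
\<close>

definition vanishes_mod :: "nat \<Rightarrow> gauss \<Rightarrow> bool" where
  "vanishes_mod n D \<longleftrightarrow> length D = 2 \<and>
     (\<forall>j<2. int n dvd (\<Sum>c\<leftarrow>D ! j. first_weight D j c) \<and>
            int n dvd (\<Sum>c\<leftarrow>D ! j. second_weight D j c)) \<and>
     int n dvd pair_invariant D"

lemma vanishes_mod_cong:
  assumes "length D' = length D"
    and "\<forall>j<2. [(\<Sum>c\<leftarrow>D' ! j. first_weight D' j c) = (\<Sum>c\<leftarrow>D ! j. first_weight D j c)] (mod int n)"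
    and "\<forall>j<2. [(\<Sum>c\<leftarrow>D' ! j. second_weight D' j c) = (\<Sum>c\<leftarrow>D ! j. second_weight D j c)] (mod int n)"
    and "[pair_invariant D' = pair_invariant D] (mod int n)"
  shows "vanishes_mod n D \<longleftrightarrow> vanishes_mod n D'"
proof -
  have "\<forall>j<2. (int n dvd (\<Sum>c\<leftarrow>D' ! j. first_weight D' j c) \<longleftrightarrow> int n dvd (\<Sum>c\<leftarrow>D ! j. first_weight D j c)) \<and>
      (int n dvd (\<Sum>c\<leftarrow>D' ! j. second_weight D' j c) \<longleftrightarrow> int n dvd (\<Sum>c\<leftarrow>D ! j. second_weight D j c))"
    using assms(2,3) cong_dvd_iff by blast
  moreover have "int n dvd pair_invariant D' \<longleftrightarrow> int n dvd pair_invariant D"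
    using assms(4) by (rule cong_dvd_iff)
  ultimately show ?thesis using assms(1) unfolding vanishes_mod_def by auto
qed

definition hole_component :: "template \<Rightarrow> nat \<Rightarrow> nat" where
  "hole_component T i = (if Inr i \<in> set (T ! 0) then 0 else 1)"

lemma hole_component_cases: "hole_component T i = 0 \<or> hole_component T i = Suc 0"
  by (simp add: hole_component_def)

lemma length_2_conv: "length T = 2 \<Longrightarrow> T = [T ! 0, T ! 1]"
  by (auto simp: list_eq_iff_nth_eq less_2_cases_iff)

lemma holes_length_2:
  "length T = 2 \<Longrightarrow> holes T = hole_indices (T ! 0) @ hole_indices (T ! 1)"
  by (subst length_2_conv) (simp_all add: holes_eq_hole_indices)

lemma hole_component_eq:
  assumes "is_template T k" "length T = 2" "Inr i \<in> set (T ! j)" "j < 2"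
  shows "hole_component T i = j"
proof -
  have "distinct (holes T)"
    using mset_eq_imp_distinct_iff[OF assms(1)[unfolded is_template_def]] by simp
  then show ?thesis
    using assms(3,4) holes_length_2[OF assms(2)]
    by (auto simp: hole_component_def set_hole_indices less_2_cases_iff)
qed

lemma hole_in_hole_component:
  assumes "is_template T k" "length T = 2" "i < k"
  shows "Inr i \<in> set (T ! hole_component T i)"
proof -
  obtain w where "w \<in> set T" "Inr i \<in> set w"
    using hole_in_template[OF assms(1)] assms(3) by blast
  moreover have "set T = {T ! 0, T ! 1}"
    by (subst length_2_conv[OF assms(2)]) simp
  ultimately show ?thesis by (auto simp: hole_component_def)
qed

lemma endpoint_on_unique:
  assumes "wf_gauss D" "length D = 2" "endpoint_on D 0 l e" "endpoint_on D 1 l e"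
  shows False
proof -
  obtain s s' where "(l, e, s) \<in># mset (D ! 0)" "(l, e, s') \<in># mset (D ! 1)"
    using assms(3,4) unfolding endpoint_on_def by auto
  moreover have "mset (concat D) = mset (D ! 0) + mset (D ! 1)"
    by (subst length_2_conv[OF assms(2)]) simp
  ultimately show False using wf_gauss_endpoint_unique[OF assms(1)] by blast
qed

lemma endpoint_on_fill_hole:
  assumes "wf_gauss (fill T f)" "is_template T k" "length T = 2" "i < k" "(l, e, s) \<in> set (f i)"
    and "j < 2"
  shows "endpoint_on (fill T f) j l e \<longleftrightarrow> j = hole_component T i"
proof -
  have "hole_component T i < 2" by (simp add: hole_component_def)
  then have "(l, e, s) \<in> set (fill T f ! hole_component T i)"
    using hole_in_hole_component[OF assms(2-4)] assms(3,5) by (auto simp: nth_fill intro!: bexI[of _ "Inr i"])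
  then have "endpoint_on (fill T f) (hole_component T i) l e" unfolding endpoint_on_def by blast
  moreover have "length (fill T f) = 2" using assms(3) by simp
  ultimately show ?thesis
    using endpoint_on_unique[OF assms(1)] assms(6) by (auto simp: hole_component_def less_2_cases_iff split: if_splits)
qed

definition fixed_arrows_untouched ::
    "template \<Rightarrow> nat \<Rightarrow> (nat \<Rightarrow> letter list) \<Rightarrow> (nat \<Rightarrow> letter list) \<Rightarrow> bool" where
  "fixed_arrows_untouched T k f g \<longleftrightarrow> (\<forall>l \<in> fst ` set (fixed_letters (concat T)). \<forall>i<k. \<forall>e s.
     (l, e, s) \<in> set (f i) \<longleftrightarrow> (l, e, s) \<in> set (g i))"

lemma closed_arrow_not_fixed:
  assumes "wf_gauss (fill T g)" "is_template T k" "i < k" "i' < k"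
    and "(l, Tl, s) \<in> set (g i)" "(l, Hd, s') \<in> set (g i')"
  shows "l \<notin> fst ` set (fixed_letters (concat T))"
proof
  assume "l \<in> fst ` set (fixed_letters (concat T))"
  then obtain e s0 where fixed: "(l, e, s0) \<in># mset (fixed_letters (concat T))" by force
  have "(l, e, if e = Tl then s else s') \<in># (\<Sum>i\<leftarrow>holes T. mset (g i))"
    using assms(3-6) set_holes[OF assms(2)] by (cases e) auto
  with fixed show False
    using wf_gauss_endpoint_unique[OF assms(1) mset_concat_fill] by blast
qed

lemma fixed_arrows_untouched_closed_picture:
  assumes "wf_gauss (fill T g)" "is_template T k"
    and "\<And>i. i < k \<Longrightarrow> fst ` (set (f i) \<union> set (g i)) \<subseteq> L"
    and "\<And>l. l \<in> L \<Longrightarrow> \<exists>i i' s s'. i < k \<and> i' < k \<and> (l, Tl, s) \<in> set (g i) \<and> (l, Hd, s') \<in> set (g i')"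
  shows "fixed_arrows_untouched T k f g"
  unfolding fixed_arrows_untouched_def
proof (intro ballI allI impI)
  fix l i e s
  assume "l \<in> fst ` set (fixed_letters (concat T))" "i < k"
  have "l \<notin> L"
  proof
    assume "l \<in> L"
    then obtain i i' s s' where "i < k" "i' < k" "(l, Tl, s) \<in> set (g i)" "(l, Hd, s') \<in> set (g i')"
      using assms(4) by blast
    then show False
      using closed_arrow_not_fixed[OF assms(1,2)] \<open>l \<in> fst ` set (fixed_letters (concat T))\<close> by blast
  qed
  then show "(l, e, s) \<in> set (f i) \<longleftrightarrow> (l, e, s) \<in> set (g i)"
    using assms(3)[OF \<open>i < k\<close>] by force
qed

lemma endpoint_on_fill_untouched:
  assumes "is_template T k" "fixed_arrows_untouched T k f g" "Inl (l, e', s') \<in> set (concat T)"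
    and "j < length T"
  shows "endpoint_on (fill T g) j l e \<longleftrightarrow> endpoint_on (fill T f) j l e"
proof -
  have "l \<in> fst ` set (fixed_letters (concat T))"
    using assms(3) by (force simp: fixed_letters_def)
  then have holes_agree: "\<forall>i<k. \<forall>e s. (l, e, s) \<in> set (f i) \<longleftrightarrow> (l, e, s) \<in> set (g i)"
    using assms(2) unfolding fixed_arrows_untouched_def by blast
  have "(l, e, s) \<in> set (expand g a) \<longleftrightarrow> (l, e, s) \<in> set (expand f a)" if "a \<in> set (T ! j)" for a s
  proof (cases a)
    case (Inr i)
    then have "i < k" using that assms(4) hole_in_template[OF assms(1)] by auto
    with Inr holes_agree show ?thesis by simp
  qed simp
  then show ?thesis using assms(4) by (auto simp: endpoint_on_def nth_fill)
qed

lemma fill_component_cong: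
  assumes D: "D = fill T f" and D': "D' = fill T g"
    and tmpl: "is_template T k" and len: "length T = 2" and j: "j < 2"
    and untouched: "fixed_arrows_untouched T k f g"
    and first: "\<And>i. i < k \<Longrightarrow> [(\<Sum>c\<leftarrow>g i. first_weight D' (hole_component T i) c) =
                                   (\<Sum>c\<leftarrow>f i. first_weight D (hole_component T i) c)] (mod m)"
    and second: "\<And>i. i < k \<Longrightarrow> [(\<Sum>c\<leftarrow>g i. second_weight D' (hole_component T i) c) =
                                    (\<Sum>c\<leftarrow>f i. second_weight D (hole_component T i) c)] (mod m)"
  shows "[(\<Sum>c\<leftarrow>D' ! j. first_weight D' j c) = (\<Sum>c\<leftarrow>D ! j. first_weight D j c)] (mod m)"
    and "[(\<Sum>c\<leftarrow>D' ! j. second_weight D' j c) = (\<Sum>c\<leftarrow>D ! j. second_weight D j c)] (mod m)"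
    and "[pair_sum_in D' j (D' ! j) - pair_sum_in D j (D ! j) =
          (\<Sum>i\<leftarrow>hole_indices (T ! j). pair_sum_in D' (hole_component T i) (g i) -
             pair_sum_in D (hole_component T i) (f i))] (mod m)"
proof -
  have in_comp: "i < k \<and> hole_component T i = j" if "Inr i \<in> set (T ! j)" for i
    using that j len hole_in_template[OF tmpl] hole_component_eq[OF tmpl len] by fastforce
  have fixed: "first_weight D' j c = first_weight D j c \<and> second_weight D' j c = second_weight D j c"
    if "Inl c \<in> set (T ! j)" for c
  proof -
    obtain l e s where c: "c = (l, e, s)" by (cases c)
    have "Inl c \<in> set (concat T)" using that j len by force
    then have "endpoint_on D' j' l e' \<longleftrightarrow> endpoint_on D j' l e'" if "j' < 2" for j' e'
      using endpoint_on_fill_untouched[OF tmpl untouched] c that len unfolding D D' by simp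
    then show ?thesis unfolding c by (rule weights_endpoint_on_cong)
  qed
  have holes: "[(\<Sum>c\<leftarrow>g i. first_weight D' j c) = (\<Sum>c\<leftarrow>f i. first_weight D j c)] (mod m) \<and>
      [(\<Sum>c\<leftarrow>g i. second_weight D' j c) = (\<Sum>c\<leftarrow>f i. second_weight D j c)] (mod m)"
    if "Inr i \<in> set (T ! j)" for i
    using in_comp[OF that] first second by auto
  note word = expand_word_cong[where w = "T ! j" and q = g and p = f
      and h' = "first_weight D' j" and h = "first_weight D j"
      and g' = "second_weight D' j" and g = "second_weight D j", OF fixed holes]
  have "D ! j = concat (map (expand f) (T ! j))" "D' ! j = concat (map (expand g) (T ! j))"
    using j len unfolding D D' by (simp_all add: nth_fill)
  moreover have "(\<Sum>i\<leftarrow>hole_indices (T ! j). pair_sum_in D' j (g i) - pair_sum_in D j (f i)) =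
      (\<Sum>i\<leftarrow>hole_indices (T ! j). pair_sum_in D' (hole_component T i) (g i) -
         pair_sum_in D (hole_component T i) (f i))"
    using in_comp by (auto simp: set_hole_indices intro!: arg_cong[where f = sum_list])
  ultimately show "[(\<Sum>c\<leftarrow>D' ! j. first_weight D' j c) = (\<Sum>c\<leftarrow>D ! j. first_weight D j c)] (mod m)"
    and "[(\<Sum>c\<leftarrow>D' ! j. second_weight D' j c) = (\<Sum>c\<leftarrow>D ! j. second_weight D j c)] (mod m)"
    and "[pair_sum_in D' j (D' ! j) - pair_sum_in D j (D ! j) =
          (\<Sum>i\<leftarrow>hole_indices (T ! j). pair_sum_in D' (hole_component T i) (g i) -
             pair_sum_in D (hole_component T i) (f i))] (mod m)"
    using word by (simp_all add: pair_sum_in_def)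
qed

lemma vanishes_mod_local:
  assumes D: "D = fill T f" and D': "D' = fill T g"
    and tmpl: "is_template T k" and len: "length T = 2"
    and untouched: "fixed_arrows_untouched T k f g"
    and first: "\<And>i. i < k \<Longrightarrow> [(\<Sum>c\<leftarrow>g i. first_weight D' (hole_component T i) c) =
                                   (\<Sum>c\<leftarrow>f i. first_weight D (hole_component T i) c)] (mod int n)"
    and second: "\<And>i. i < k \<Longrightarrow> [(\<Sum>c\<leftarrow>g i. second_weight D' (hole_component T i) c) =
                                    (\<Sum>c\<leftarrow>f i. second_weight D (hole_component T i) c)] (mod int n)"
    and pairs: "[(\<Sum>i<k. pair_sum_in D' (hole_component T i) (g i)) =
                 (\<Sum>i<k. pair_sum_in D (hole_component T i) (f i))] (mod int n)"
  shows "vanishes_mod n D \<longleftrightarrow> vanishes_mod n D'"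
proof -
  define \<delta> where
    "\<delta> i = pair_sum_in D' (hole_component T i) (g i) - pair_sum_in D (hole_component T i) (f i)" for i
  note component = fill_component_cong[OF D D' tmpl len _ untouched first second]
  have "(\<Sum>i\<leftarrow>hole_indices (T ! 0). \<delta> i) + (\<Sum>i\<leftarrow>hole_indices (T ! 1). \<delta> i) = (\<Sum>i<k. \<delta> i)"
    using sum_list_holes[OF tmpl, of \<delta>] holes_length_2[OF len] by simp
  also have "[\<dots> = 0] (mod int n)"
    using pairs by (simp add: \<delta>_def sum_subtractf cong_iff_dvd_diff)
  finally have "[pair_invariant D' - pair_invariant D = 0] (mod int n)"
    using cong_add[OF component(3)[of 0] component(3)[of 1]]
    by (simp add: \<delta>_def pair_invariant_def cong_trans algebra_simps)
  then have "[pair_invariant D' = pair_invariant D] (mod int n)"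
    by (simp add: cong_iff_dvd_diff)
  moreover have "length D' = length D" unfolding D D' by simp
  ultimately show ?thesis using component(1,2) by (intro vanishes_mod_cong) auto
qed

section \<open>Invariance under the moves\<close>

lemma vanishes_mod_rotate:
  assumes len: "length X = 2" and i: "i < 2" and Y: "Y = X[i := rotate1 (X ! i)]"
  shows "vanishes_mod n X \<longleftrightarrow> vanishes_mod n Y"
proof -
  have nth: "Y ! j = (if j = i then rotate1 (X ! j) else X ! j)" for j
    using len i Y by simp
  then have "endpoint_on Y = endpoint_on X"
    by (simp add: fun_eq_iff endpoint_on_def)
  then have "first_weight Y j c = first_weight X j c \<and> second_weight Y j c = second_weight X j c" for j c
    by (cases c) (simp only: first_weight.simps second_weight.simps)
  then have weights: "first_weight Y = first_weight X" "second_weight Y = second_weight X"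
    by (simp_all add: fun_eq_iff)
  have totals: "\<forall>j<2. (\<Sum>c\<leftarrow>Y ! j. first_weight Y j c) = (\<Sum>c\<leftarrow>X ! j. first_weight X j c) \<and>
      (\<Sum>c\<leftarrow>Y ! j. second_weight Y j c) = (\<Sum>c\<leftarrow>X ! j. second_weight X j c)"
    by (simp add: nth weights sum_list_rotate1)
  have "[pair_invariant Y = pair_invariant X] (mod int n)" if "vanishes_mod n X \<or> vanishes_mod n Y"
  proof -
    let ?h = "first_weight X i" and ?g = "second_weight X i"
    have dvd: "int n dvd (\<Sum>c\<leftarrow>X ! i. ?h c)" "int n dvd (\<Sum>c\<leftarrow>X ! i. ?g c)"
      using that totals i unfolding vanishes_mod_def by auto
    have diff: "pair_invariant Y - pair_invariant X =
        pair_sum_in X i (rotate1 (X ! i)) - pair_sum_in X i (X ! i)"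
      using i by (auto simp: pair_invariant_def pair_sum_in_def weights nth less_2_cases_iff)
    have "int n dvd (pair_invariant Y - pair_invariant X)"
    proof (cases "X ! i")
      case (Cons x xs)
      have "pair_invariant Y - pair_invariant X =
          (\<Sum>c\<leftarrow>X ! i. ?h c) * ?g x - ?h x * (\<Sum>c\<leftarrow>X ! i. ?g c)"
        unfolding diff pair_sum_in_def Cons pair_sum_rotate1 by simp
      with dvd show ?thesis by simp
    qed (simp add: diff)
    then show ?thesis by (simp add: cong_iff_dvd_diff)
  qed
  moreover have "length Y = length X" using Y by simp
  ultimately show ?thesis using vanishes_mod_cong[of Y X n] totals by (metis cong_refl)
qed

lemma vanishes_mod_rename:
  assumes len: "length X = 2" and "inj \<pi>" and Y: "Y = map (map (\<lambda>(l, e, s). (\<pi> l, e, s))) X"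
  shows "vanishes_mod n X \<longleftrightarrow> vanishes_mod n Y"
proof -
  define rn :: "letter \<Rightarrow> letter" where "rn = (\<lambda>(l, e, s). (\<pi> l, e, s))"
  have nth: "Y ! j = map rn (X ! j)" if "j < 2" for j
    using that len Y by (simp add: rn_def)
  have "endpoint_on Y j (\<pi> l) e \<longleftrightarrow> endpoint_on X j l e" if "j < 2" for j l e
    by (auto simp: endpoint_on_def nth[OF that] rn_def inj_eq[OF \<open>inj \<pi>\<close>])
  then have "first_weight Y j (rn c) = first_weight X j c \<and> second_weight Y j (rn c) = second_weight X j c"
    for j c by (cases c) (simp add: rn_def)
  then have weights: "first_weight Y j \<circ> rn = first_weight X j" "second_weight Y j \<circ> rn = second_weight X j"
    for j by (simp_all add: fun_eq_iff)
  have "(\<Sum>c\<leftarrow>Y ! j. first_weight Y j c) = (\<Sum>c\<leftarrow>X ! j. first_weight X j c) \<and>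
      (\<Sum>c\<leftarrow>Y ! j. second_weight Y j c) = (\<Sum>c\<leftarrow>X ! j. second_weight X j c) \<and>
      pair_sum_in Y j (Y ! j) = pair_sum_in X j (X ! j)" if "j < 2" for j
    using weights by (simp add: nth[OF that] pair_sum_in_def pair_sum_map)
  moreover have "length Y = length X" using Y by simp
  ultimately show ?thesis
    by (intro vanishes_mod_cong) (simp_all add: pair_invariant_def)
qed

lemma vanishes_mod_iso_step:
  assumes "iso_step X Y" "length X = 2"
  shows "vanishes_mod n X \<longleftrightarrow> vanishes_mod n Y"
  using assms vanishes_mod_rotate vanishes_mod_rename unfolding iso_step_def by metis

lemma vanishes_mod_OC:
  assumes tmpl: "is_template T 1" and len: "length T = 2" and pic: "OC_pic f g"
  shows "vanishes_mod n (fill T f) \<longleftrightarrow> vanishes_mod n (fill T g)"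
proof -
  obtain x y s t where f0: "f 0 = [(x, Tl, s), (y, Tl, t)]" and g0: "g 0 = [(y, Tl, t), (x, Tl, s)]"
    using pic unfolding OC_pic_def by blast
  have "set (expand g a) = set (expand f a)" if "a \<in> set (T ! j)" "j < 2" for a j
  proof (cases a)
    case (Inr i)
    with that len have "i = 0" using hole_in_template[OF tmpl, of i] by force
    with Inr show ?thesis by (simp add: f0 g0 insert_commute)
  qed simp
  then have "set (fill T g ! j) = set (fill T f ! j)" if "j < 2" for j
    using that len by (simp add: nth_fill)
  then have "endpoint_on (fill T g) j = endpoint_on (fill T f) j" if "j < 2" for j
    using that by (simp add: fun_eq_iff endpoint_on_def)
  then have weights: "first_weight (fill T g) j c = first_weight (fill T f) j c"
      "second_weight (fill T g) j c = second_weight (fill T f) j c" for j c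
    by (cases c; simp)+
  have "fixed_arrows_untouched T 1 f g"
    using f0 g0 by (auto simp: fixed_arrows_untouched_def)
  then show ?thesis
  proof (rule vanishes_mod_local[OF refl refl tmpl len])
    show "[(\<Sum>c\<leftarrow>g i. first_weight (fill T g) (hole_component T i) c) =
           (\<Sum>c\<leftarrow>f i. first_weight (fill T f) (hole_component T i) c)] (mod int n)"
      "[(\<Sum>c\<leftarrow>g i. second_weight (fill T g) (hole_component T i) c) =
           (\<Sum>c\<leftarrow>f i. second_weight (fill T f) (hole_component T i) c)] (mod int n)" if "i < 1" for i
      using that by (simp_all add: f0 g0 weights add.commute)
    \<comment> \<open>A tail has first weight 0 on component 0 and second weight 0 on component 1; heads
      have no such property, which is why UC-moves are not invariant.\<close>
    show "[(\<Sum>i<1. pair_sum_in (fill T g) (hole_component T i) (g i)) =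
           (\<Sum>i<1. pair_sum_in (fill T f) (hole_component T i) (f i))] (mod int n)"
      using hole_component_cases[of T 0] by (auto simp: f0 g0 weights pair_sum_in_def)
  qed
qed

lemma vanishes_mod_R1:
  assumes wf: "wf_gauss (fill T g)" and tmpl: "is_template T 1" and len: "length T = 2"
    and pic: "R1_pic f g"
  shows "vanishes_mod n (fill T f) \<longleftrightarrow> vanishes_mod n (fill T g)"
proof -
  obtain x s where f0: "f 0 = []"
    and g0: "g 0 = [(x, Tl, s), (x, Hd, s)] \<or> g 0 = [(x, Hd, s), (x, Tl, s)]"
    using pic unfolding R1_pic_def by blast
  have mem: "(x, e, s) \<in> set (g 0)" for e using g0 by (cases e) auto
  note comps = endpoint_on_fill_hole[OF wf tmpl len zero_less_one mem]
  have "fixed_arrows_untouched T 1 f g"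
    using mem by (intro fixed_arrows_untouched_closed_picture[OF wf tmpl, where L = "{x}"])
      (use f0 g0 in auto)
  then show ?thesis
  proof (rule vanishes_mod_local[OF refl refl tmpl len])
    show "[(\<Sum>c\<leftarrow>g i. first_weight (fill T g) (hole_component T i) c) =
           (\<Sum>c\<leftarrow>f i. first_weight (fill T f) (hole_component T i) c)] (mod int n)"
      "[(\<Sum>c\<leftarrow>g i. second_weight (fill T g) (hole_component T i) c) =
           (\<Sum>c\<leftarrow>f i. second_weight (fill T f) (hole_component T i) c)] (mod int n)" if "i < 1" for i
      using that g0 hole_component_cases[of T 0] by (elim disjE; simp add: f0 comps)+
    show "[(\<Sum>i<1. pair_sum_in (fill T g) (hole_component T i) (g i)) =
           (\<Sum>i<1. pair_sum_in (fill T f) (hole_component T i) (f i))] (mod int n)"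
      using g0 hole_component_cases[of T 0] by (elim disjE; simp add: f0 comps pair_sum_in_def)
  qed
qed

lemma R2_picture_weights:
  assumes c: "c0 = 0 \<or> c0 = Suc 0" "c1 = 0 \<or> c1 = Suc 0"
    and tails: "\<And>j l. j < 2 \<Longrightarrow> l \<in> {x, y} \<Longrightarrow> endpoint_on D j l Tl \<longleftrightarrow> j = c0"
    and heads: "\<And>j l. j < 2 \<Longrightarrow> l \<in> {x, y} \<Longrightarrow> endpoint_on D j l Hd \<longleftrightarrow> j = c1"
    and w0: "w0 = [(x, Tl, s), (y, Tl, \<not> s)] \<or> w0 = [(y, Tl, \<not> s), (x, Tl, s)]"
    and w1: "w1 = [(x, Hd, s), (y, Hd, \<not> s)] \<or> w1 = [(y, Hd, \<not> s), (x, Hd, s)]"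
  shows "(\<Sum>c\<leftarrow>w0. first_weight D c0 c) = 0 \<and> (\<Sum>c\<leftarrow>w0. second_weight D c0 c) = 0 \<and>
    (\<Sum>c\<leftarrow>w1. first_weight D c1 c) = 0 \<and> (\<Sum>c\<leftarrow>w1. second_weight D c1 c) = 0 \<and>
    pair_sum_in D c0 w0 = 0 \<and> pair_sum_in D c1 w1 = 0"
  using c w0 w1 by (elim disjE; cases s) (simp_all add: tails heads sign_int_def pair_sum_in_def)

lemma vanishes_mod_R2:
  assumes wf: "wf_gauss (fill T g)" and tmpl: "is_template T 2" and len: "length T = 2"
    and pic: "R2_pic f g"
  shows "vanishes_mod n (fill T f) \<longleftrightarrow> vanishes_mod n (fill T g)"
proof -
  obtain x y s where f: "f 0 = []" "f 1 = []"
    and g0: "g 0 = [(x, Tl, s), (y, Tl, \<not> s)] \<or> g 0 = [(y, Tl, \<not> s), (x, Tl, s)]"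
    and g1: "g 1 = [(x, Hd, s), (y, Hd, \<not> s)] \<or> g 1 = [(y, Hd, \<not> s), (x, Hd, s)]"
    using pic unfolding R2_pic_def by blast
  have mem: "(x, Tl, s) \<in> set (g 0)" "(y, Tl, \<not> s) \<in> set (g 0)"
    "(x, Hd, s) \<in> set (g 1)" "(y, Hd, \<not> s) \<in> set (g 1)"
    using g0 g1 by auto
  have "endpoint_on (fill T g) j l Tl \<longleftrightarrow> j = hole_component T 0"
    "endpoint_on (fill T g) j l Hd \<longleftrightarrow> j = hole_component T 1" if "j < 2" "l \<in> {x, y}" for j l
    using that mem[THEN endpoint_on_fill_hole[OF wf tmpl len, rotated]] by auto
  note weights = R2_picture_weights[OF hole_component_cases hole_component_cases this g0 g1]
  have "fixed_arrows_untouched T 2 f g"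
  proof (rule fixed_arrows_untouched_closed_picture[OF wf tmpl, where L = "{x, y}"])
    show "fst ` (set (f i) \<union> set (g i)) \<subseteq> {x, y}" if "i < 2" for i
      using that f g0 g1 by (auto simp: less_2_cases_iff)
    have "0 < (2::nat)" "1 < (2::nat)" by simp_all
    then show "\<exists>i i' s s'. i < 2 \<and> i' < 2 \<and> (l, Tl, s) \<in> set (g i) \<and> (l, Hd, s') \<in> set (g i')"
      if "l \<in> {x, y}" for l
      using that mem by blast
  qed
  then show ?thesis
  proof (rule vanishes_mod_local[OF refl refl tmpl len])
    fix i :: nat
    assume "i < 2"
    then have "i = 0 \<or> i = 1" by auto
    then show "[(\<Sum>c\<leftarrow>g i. first_weight (fill T g) (hole_component T i) c) =
           (\<Sum>c\<leftarrow>f i. first_weight (fill T f) (hole_component T i) c)] (mod int n)"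
      "[(\<Sum>c\<leftarrow>g i. second_weight (fill T g) (hole_component T i) c) =
           (\<Sum>c\<leftarrow>f i. second_weight (fill T f) (hole_component T i) c)] (mod int n)"
      using f weights by auto
  next
    show "[(\<Sum>i<2. pair_sum_in (fill T g) (hole_component T i) (g i)) =
           (\<Sum>i<2. pair_sum_in (fill T f) (hole_component T i) (f i))] (mod int n)"
      using f weights by (simp add: numeral_2_eq_2 lessThan_Suc pair_sum_in_def)
  qed
qed

lemma Vn_picture_weights:
  assumes tails: "\<And>j x. j < 2 \<Longrightarrow> x \<in> set xs \<Longrightarrow> endpoint_on D j x Tl \<longleftrightarrow> j = c0"
    and heads: "\<And>j x. j < 2 \<Longrightarrow> x \<in> set xs \<Longrightarrow> endpoint_on D j x Hd \<longleftrightarrow> j = c1"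
  shows "int (length xs) dvd (\<Sum>c\<leftarrow>map (\<lambda>x. (x, e, s)) xs. first_weight D j c)"
    and "int (length xs) dvd (\<Sum>c\<leftarrow>map (\<lambda>x. (x, e, s)) xs. second_weight D j c)"
    and "pair_sum_in D c0 (map (\<lambda>x. (x, Tl, s)) xs) = 0"
    and "pair_sum_in D c1 (map (\<lambda>x. (x, Hd, s)) xs) = 0"
proof -
  have "first_weight D j (x, e, s) = first_weight D j (hd xs, e, s) \<and>
      second_weight D j (x, e, s) = second_weight D j (hd xs, e, s)" if "x \<in> set xs" for x
  proof -
    have "hd xs \<in> set xs" using that by (cases xs) auto
    with that show ?thesis by (simp add: tails heads)
  qed
  then show "int (length xs) dvd (\<Sum>c\<leftarrow>map (\<lambda>x. (x, e, s)) xs. first_weight D j c)"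
    and "int (length xs) dvd (\<Sum>c\<leftarrow>map (\<lambda>x. (x, e, s)) xs. second_weight D j c)"
    using dvd_sum_list_uniform[of xs "\<lambda>x. first_weight D j (x, e, s)"]
      dvd_sum_list_uniform[of xs "\<lambda>x. second_weight D j (x, e, s)"] by (simp_all add: comp_def)
  show "pair_sum_in D c0 (map (\<lambda>x. (x, Tl, s)) xs) = 0"
    unfolding pair_sum_in_def pair_sum_map by (rule pair_sum_eq_0) (cases "c0 = 0"; simp)
  show "pair_sum_in D c1 (map (\<lambda>x. (x, Hd, s)) xs) = 0"
    unfolding pair_sum_in_def pair_sum_map by (rule pair_sum_eq_0) (cases "c0 = 0"; simp add: tails)
qed

lemma vanishes_mod_Vn:
  assumes wf: "wf_gauss (fill T g)" and tmpl: "is_template T 2" and len: "length T = 2"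
    and pic: "Vn_pic n f g"
  shows "vanishes_mod n (fill T f) \<longleftrightarrow> vanishes_mod n (fill T g)"
proof -
  obtain xs s where f: "f 0 = []" "f 1 = []" and "length xs = n"
    and g0: "g 0 = map (\<lambda>x. (x, Tl, s)) xs" and g1: "g 1 = map (\<lambda>x. (x, Hd, s)) xs"
    using pic unfolding Vn_pic_def by blast
  have mem: "(x, Tl, s) \<in> set (g 0)" "(x, Hd, s) \<in> set (g 1)" if "x \<in> set xs" for x
    using that g0 g1 by auto
  have "endpoint_on (fill T g) j x Tl \<longleftrightarrow> j = hole_component T 0"
    "endpoint_on (fill T g) j x Hd \<longleftrightarrow> j = hole_component T 1" if "j < 2" "x \<in> set xs" for j x
    using that mem[THEN endpoint_on_fill_hole[OF wf tmpl len, rotated]] by auto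
  note weights = Vn_picture_weights[where xs = xs, OF this, unfolded \<open>length xs = n\<close>]
  have "fixed_arrows_untouched T 2 f g"
  proof (rule fixed_arrows_untouched_closed_picture[OF wf tmpl, where L = "set xs"])
    show "fst ` (set (f i) \<union> set (g i)) \<subseteq> set xs" if "i < 2" for i
      using that f g0 g1 by (auto simp: less_2_cases_iff)
    have "0 < (2::nat)" "1 < (2::nat)" by simp_all
    then show "\<exists>i i' s s'. i < 2 \<and> i' < 2 \<and> (l, Tl, s) \<in> set (g i) \<and> (l, Hd, s') \<in> set (g i')"
      if "l \<in> set xs" for l
      using mem[OF that] by blast
  qed
  then show ?thesis
  proof (rule vanishes_mod_local[OF refl refl tmpl len])
    fix i :: nat
    assume "i < 2"
    then have "i = 0 \<or> i = 1" by auto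
    then show "[(\<Sum>c\<leftarrow>g i. first_weight (fill T g) (hole_component T i) c) =
           (\<Sum>c\<leftarrow>f i. first_weight (fill T f) (hole_component T i) c)] (mod int n)"
      "[(\<Sum>c\<leftarrow>g i. second_weight (fill T g) (hole_component T i) c) =
           (\<Sum>c\<leftarrow>f i. second_weight (fill T f) (hole_component T i) c)] (mod int n)"
      using f g0 g1 weights by (auto simp: cong_0_iff)
  next
    show "[(\<Sum>i<2. pair_sum_in (fill T g) (hole_component T i) (g i)) =
           (\<Sum>i<2. pair_sum_in (fill T f) (hole_component T i) (f i))] (mod int n)"
      using f g0 g1 weights by (simp add: numeral_2_eq_2 lessThan_Suc pair_sum_in_def)
  qed
qed

lemma r3_side_swap: "r3_side (\<not> lam) x y z a b c i = rev (r3_side lam x y z a b c i)"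
  by (auto simp: r3_side_def Let_def)

lemma R3_pair_sums:
  assumes c: "c0 = 0 \<or> c0 = Suc 0" "c1 = 0 \<or> c1 = Suc 0" "c2 = 0 \<or> c2 = Suc 0"
    and comps: "\<And>j. j < 2 \<Longrightarrow> endpoint_on D j x Tl \<longleftrightarrow> j = c0" "\<And>j. j < 2 \<Longrightarrow> endpoint_on D j y Tl \<longleftrightarrow> j = c0"
      "\<And>j. j < 2 \<Longrightarrow> endpoint_on D j x Hd \<longleftrightarrow> j = c1" "\<And>j. j < 2 \<Longrightarrow> endpoint_on D j z Tl \<longleftrightarrow> j = c1"
      "\<And>j. j < 2 \<Longrightarrow> endpoint_on D j y Hd \<longleftrightarrow> j = c2" "\<And>j. j < 2 \<Longrightarrow> endpoint_on D j z Hd \<longleftrightarrow> j = c2"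
  shows "pair_sum_in D c0 (rev (r3_side lam x y z a b c 0)) +
      pair_sum_in D c1 (rev (r3_side lam x y z a b c 1)) +
      pair_sum_in D c2 (rev (r3_side lam x y z a b c 2)) =
    pair_sum_in D c0 (r3_side lam x y z a b c 0) + pair_sum_in D c1 (r3_side lam x y z a b c 1) +
      pair_sum_in D c2 (r3_side lam x y z a b c 2)"
  using c by (elim disjE; cases lam; cases a; cases b; cases c)
    (simp_all add: comps r3_side_def pair_sum_in_def sign_int_def)

lemma weights_fill_same_holes:
  assumes wff: "wf_gauss (fill T f)" and wfg: "wf_gauss (fill T g)"
    and tmpl: "is_template T k" and len: "length T = 2"
    and same: "\<And>i. i < k \<Longrightarrow> set (g i) = set (f i)"
    and closed: "\<And>e'. \<exists>i s'. i < k \<and> (l, e', s') \<in> set (f i)"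
  shows "first_weight (fill T g) j (l, e, s) = first_weight (fill T f) j (l, e, s) \<and>
    second_weight (fill T g) j (l, e, s) = second_weight (fill T f) j (l, e, s)"
proof (rule weights_endpoint_on_cong)
  fix j' :: nat and e'
  assume "j' < 2"
  obtain i s' where i: "i < k" and in_f: "(l, e', s') \<in> set (f i)" using closed by blast
  then have in_g: "(l, e', s') \<in> set (g i)" using same by simp
  show "endpoint_on (fill T g) j' l e' \<longleftrightarrow> endpoint_on (fill T f) j' l e'"
    using endpoint_on_fill_hole[OF wff tmpl len i in_f \<open>j' < 2\<close>]
      endpoint_on_fill_hole[OF wfg tmpl len i in_g \<open>j' < 2\<close>] by simp
qed

lemma vanishes_mod_R3:
  assumes wff: "wf_gauss (fill T f)" and wfg: "wf_gauss (fill T g)" and tmpl: "is_template T 3"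
    and len: "length T = 2" and pic: "R3_pic f g"
  shows "vanishes_mod n (fill T f) \<longleftrightarrow> vanishes_mod n (fill T g)"
proof -
  obtain lam x y z a b c where
    fg: "\<forall>i<3. f i = r3_side lam x y z a b c i \<and> g i = r3_side (\<not> lam) x y z a b c i"
    using pic unfolding R3_pic_def by blast
  let ?D = "fill T f" and ?D' = "fill T g"
  have f: "f i = r3_side lam x y z a b c i" and g: "g i = rev (f i)" if "i < 3" for i
    using fg that by (simp_all add: r3_side_swap)
  have three: "0 < (3::nat)" "1 < (3::nat)" "2 < (3::nat)" by simp_all
  have mem: "(x, Tl, a) \<in> set (f 0)" "(y, Tl, b) \<in> set (f 0)" "(x, Hd, a) \<in> set (f 1)"
    "(z, Tl, c) \<in> set (f 1)" "(y, Hd, b) \<in> set (f 2)" "(z, Hd, c) \<in> set (f 2)"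
    using f[OF three(1)] f[OF three(2)] f[OF three(3)] by (simp_all add: r3_side_def Let_def)
  have same: "set (g i) = set (f i)" if "i < 3" for i
    using g[OF that] by simp
  have labels: "fst ` set (f i) \<subseteq> {x, y, z}" if "i < 3" for i
    using f[OF that] by (auto simp: r3_side_def Let_def)
  have closed: "\<exists>i s'. i < 3 \<and> (l, e', s') \<in> set (f i)" if "l \<in> {x, y, z}" for l e'
    using that mem three by (cases e') blast+
  have weights:
    "first_weight ?D' j d = first_weight ?D j d \<and> second_weight ?D' j d = second_weight ?D j d"
    if "d \<in> set (f i)" "i < 3" for d i j
  proof -
    obtain l e s where d: "d = (l, e, s)" by (cases d)
    with that labels have "l \<in> {x, y, z}" by force
    then show ?thesis
      unfolding d by (intro weights_fill_same_holes[OF wff wfg tmpl len same] closed)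
  qed
  have comps: "endpoint_on ?D j l e \<longleftrightarrow> j = hole_component T i"
    if "(l, e, s) \<in> set (f i)" "i < 3" "j < 2" for l e s i j
    using endpoint_on_fill_hole[OF wff tmpl len that(2,1,3)] .
  have "fixed_arrows_untouched T 3 f g"
    using same by (simp add: fixed_arrows_untouched_def)
  then show ?thesis
  proof (rule vanishes_mod_local[OF refl refl tmpl len])
    fix i :: nat
    assume i: "i < 3"
    show "[(\<Sum>d\<leftarrow>g i. first_weight ?D' (hole_component T i) d) =
           (\<Sum>d\<leftarrow>f i. first_weight ?D (hole_component T i) d)] (mod int n)"
      "[(\<Sum>d\<leftarrow>g i. second_weight ?D' (hole_component T i) d) =
           (\<Sum>d\<leftarrow>f i. second_weight ?D (hole_component T i) d)] (mod int n)"
      using weights[OF _ i] by (simp_all add: g[OF i] flip: rev_map cong: map_cong)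
  next
    have "pair_sum_in ?D' (hole_component T i) (g i) =
        pair_sum_in ?D (hole_component T i) (rev (f i))" if "i < 3" for i
      unfolding g[OF that] pair_sum_in_def using weights that by (intro pair_sum_cong) auto
    moreover have "pair_sum_in ?D (hole_component T 0) (rev (f 0)) +
        pair_sum_in ?D (hole_component T 1) (rev (f 1)) + pair_sum_in ?D (hole_component T 2) (rev (f 2)) =
      pair_sum_in ?D (hole_component T 0) (f 0) + pair_sum_in ?D (hole_component T 1) (f 1) +
        pair_sum_in ?D (hole_component T 2) (f 2)"
      unfolding f[OF three(1)] f[OF three(2)] f[OF three(3)]
      by (rule R3_pair_sums[OF hole_component_cases hole_component_cases hole_component_cases
            comps[OF mem(1) three(1)] comps[OF mem(2) three(1)] comps[OF mem(3) three(2)]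
            comps[OF mem(4) three(2)] comps[OF mem(5) three(3)] comps[OF mem(6) three(3)]])
    ultimately have "(\<Sum>i<3. pair_sum_in ?D' (hole_component T i) (g i)) =
        (\<Sum>i<3. pair_sum_in ?D (hole_component T i) (f i))"
      using three by (simp add: sum_lessThan_3)
    then show "[(\<Sum>i<3. pair_sum_in ?D' (hole_component T i) (g i)) =
           (\<Sum>i<3. pair_sum_in ?D (hole_component T i) (f i))] (mod int n)"
      by simp
  qed
qed

lemma vanishes_mod_local_move:
  assumes move: "local_move k M E E'" and len: "length E = 2"
    and pic: "\<And>T f g. wf_gauss (fill T f) \<Longrightarrow> wf_gauss (fill T g) \<Longrightarrow> is_template T k \<Longrightarrow>
      length T = 2 \<Longrightarrow> M f g \<Longrightarrow> vanishes_mod n (fill T f) \<longleftrightarrow> vanishes_mod n (fill T g)"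
  shows "vanishes_mod n E \<longleftrightarrow> vanishes_mod n E'"
proof -
  obtain T f g where "wf_gauss E" "wf_gauss E'" "is_template T k" "E = fill T f" "E' = fill T g"
    and "M f g \<or> M g f"
    using move unfolding local_move_def by blast
  moreover from this len have "length T = 2" by simp
  ultimately show ?thesis using pic by blast
qed

lemma vanishes_mod_step:
  assumes "welded_step E E' \<or> Vn_step n E E'" and "vanishes_mod n E"
  shows "vanishes_mod n E'"
proof -
  have len: "length E = 2" using assms(2) unfolding vanishes_mod_def by simp
  from assms(1) have "vanishes_mod n E \<longleftrightarrow> vanishes_mod n E'"
    unfolding welded_step_def Vn_step_def
  proof (elim disjE)
    assume "iso_step E E'"
    then show ?thesis using len by (rule vanishes_mod_iso_step)
  next
    assume "iso_step E' E"
    moreover from this len have "length E' = 2" unfolding iso_step_def by auto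
    ultimately show ?thesis using vanishes_mod_iso_step by blast
  next
    assume "local_move 1 R1_pic E E'"
    then show ?thesis using len by (rule vanishes_mod_local_move) (rule vanishes_mod_R1)
  next
    assume "local_move 2 R2_pic E E'"
    then show ?thesis using len by (rule vanishes_mod_local_move) (rule vanishes_mod_R2)
  next
    assume "local_move 3 R3_pic E E'"
    then show ?thesis using len by (rule vanishes_mod_local_move) (rule vanishes_mod_R3)
  next
    assume "local_move 1 OC_pic E E'"
    then show ?thesis using len by (rule vanishes_mod_local_move) (rule vanishes_mod_OC)
  next
    assume "local_move 2 (Vn_pic n) E E'"
    then show ?thesis using len by (rule vanishes_mod_local_move) (rule vanishes_mod_Vn)
  qed
  with assms(2) show ?thesis by simp
qed

lemma vanishes_mod_rtranclp:
  "(\<lambda>E E'. welded_step E E' \<or> Vn_step n E E')\<^sup>*\<^sup>* D D' \<Longrightarrow> vanishes_mod n D \<Longrightarrow> vanishes_mod n D'"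
  by (induction rule: rtranclp_induct) (auto intro: vanishes_mod_step)

section \<open>A UC-move that changes the invariant\<close>

text \<open>
  Component 0 carries a kink (arrow 0) followed by the heads of the arrows 1 (positive) and
  2 (negative) from component 1; the UC-move exchanges the adjacent heads of arrows 0 and 1.
\<close>

definition uc_source :: gauss where
  "uc_source = [[(0, Tl, True), (0, Hd, True), (1, Hd, True), (2, Hd, False)],
                [(1, Tl, True), (2, Tl, False)]]"

definition uc_target :: gauss where
  "uc_target = [[(0, Tl, True), (1, Hd, True), (0, Hd, True), (2, Hd, False)],
                [(1, Tl, True), (2, Tl, False)]]"

lemma wf_gauss_three_arrows:
  assumes "mset (concat D) = {#(0, Tl, True), (0, Hd, True), (1, Tl, True), (1, Hd, True),
      (2, Tl, False), (2, Hd, False)#}"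
  shows "wf_gauss D"
  unfolding wf_gauss_def Let_def
proof
  fix l :: nat
  have occ: "mset (filter (\<lambda>c. fst c = l) (concat D)) =
      filter_mset (\<lambda>c. fst c = l) {#(0, Tl, True), (0, Hd, True), (1, Tl, True), (1, Hd, True),
        (2, Tl, False), (2, Hd, False)#}"
    by (simp only: mset_filter assms)
  show "filter (\<lambda>c. fst c = l) (concat D) = [] \<or>
      (\<exists>s. mset (filter (\<lambda>c. fst c = l) (concat D)) = {#(l, Tl, s), (l, Hd, s)#})"
    unfolding mset_zero_iff[symmetric] occ
    by (cases "l = 0"; cases "l = 1"; cases "l = 2") (auto simp: add_mset_commute)
qed

lemma UC_step_uc_source: "UC_step uc_source uc_target"
proof -
  define T :: template where
    "T = [[Inl (0, Tl, True), Inr 0, Inl (2, Hd, False)], [Inl (1, Tl, True), Inl (2, Tl, False)]]"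
  have "is_template T 1" by (simp add: is_template_def holes_def T_def)
  moreover have "uc_source = fill T (\<lambda>_. [(0, Hd, True), (1, Hd, True)])"
    "uc_target = fill T (\<lambda>_. [(1, Hd, True), (0, Hd, True)])"
    by (simp_all add: fill_def T_def uc_source_def uc_target_def)
  moreover have "wf_gauss uc_source" "wf_gauss uc_target"
    by (auto intro!: wf_gauss_three_arrows simp: uc_source_def uc_target_def add_mset_commute)
  ultimately show ?thesis
    unfolding UC_step_def local_move_def UC_pic_def by blast
qed

lemma vanishes_mod_uc_source: "vanishes_mod n uc_source"
  by (simp add: vanishes_mod_def pair_invariant_def pair_sum_in_def uc_source_def endpoint_on_def
      sign_int_def less_2_cases_iff ex_bool_eq all_bool_eq)

lemma pair_invariant_uc_target: "pair_invariant uc_target = -1"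
  by (simp add: pair_invariant_def pair_sum_in_def uc_target_def endpoint_on_def sign_int_def ex_bool_eq)

theorem corollary5p3:
  fixes n :: nat
  assumes "0 < n"
  shows "(\<forall>D D'. UC_step D D' \<longrightarrow> (\<lambda>E E'. welded_step E E' \<or> Vn_step n E E')\<^sup>*\<^sup>* D D')
         \<longleftrightarrow> n = 1"
proof
  assume "\<forall>D D'. UC_step D D' \<longrightarrow> (\<lambda>E E'. welded_step E E' \<or> Vn_step n E E')\<^sup>*\<^sup>* D D'"
  then have "(\<lambda>E E'. welded_step E E' \<or> Vn_step n E E')\<^sup>*\<^sup>* uc_source uc_target"
    using UC_step_uc_source by blast
  then have "vanishes_mod n uc_target"
    using vanishes_mod_uc_source by (rule vanishes_mod_rtranclp)
  then have "int n dvd 1"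
    using pair_invariant_uc_target unfolding vanishes_mod_def by simp
  then show "n = 1" by simp
next
  assume "n = 1"
  then show "\<forall>D D'. UC_step D D' \<longrightarrow> (\<lambda>E E'. welded_step E E' \<or> Vn_step n E E')\<^sup>*\<^sup>* D D'"
    using UC_step_by_Vn_step_1 mono_rtranclp[of "Vn_step 1" "\<lambda>E E'. welded_step E E' \<or> Vn_step 1 E E'"]
    by blast
qed

end
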